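(* Let $Y$ be a normed linear space, $F\subset\mathbb R^n$ and $x\in F\cap\operatorname{der}F$. If $f\colon F\to Y$ is relatively strictly differentiable at $x$ and $\operatorname{Ptg}(F,x)$ spans $\mathbb R^n$, then the relative strict derivative of $f$ at $x$ is determined uniquely.
   Context: $\operatorname{der}F$ is the set of accumulation points of $F$. $\operatorname{Ptg}(F,x)$ is the set of $v\in\mathbb R^n$ for which there are $x_k,y_k\in F$, $\alpha_k\in\mathbb R$ with $x_k\to x$, $y_k\to x$, $\alpha_k(y_k-x_k)\to v$. $L\in\mathcal L(\mathbb R^n,Y)$ is a relative strict derivative of $f$ at $x$ if $x$ is isolated in $F$ or $\|f(y)-f(z)-L(y-z)\|/|y-z|\to0$ as $y,z\to x$, $y,z\in F$, $y\ne z$ (with $y=x$ or $z=x$ allowed); $f$ is relatively strictly differentiable at $x$ if such $L$ exists. *)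

theory Defs
  imports "HOL-Analysis.Analysis"
begin

definition der :: "'a::topological_space set \<Rightarrow> 'a set" where
  "der F = {x. x islimpt F}"

definition Ptg :: "'a::real_normed_vector set \<Rightarrow> 'a \<Rightarrow> 'a set" where
  "Ptg F x = {v. \<exists>xk yk (\<alpha>k::nat \<Rightarrow> real).
      (\<forall>k. xk k \<in> F \<and> yk k \<in> F) \<and> xk \<longlonglongrightarrow> x \<and> yk \<longlonglongrightarrow> x \<and>
      (\<lambda>k. \<alpha>k k *\<^sub>R (yk k - xk k)) \<longlonglongrightarrow> v}"

definition rel_strict_deriv ::
  "'a::euclidean_space set \<Rightarrow> ('a \<Rightarrow> 'b::real_normed_vector) \<Rightarrow> 'a \<Rightarrow> ('a \<Rightarrow> 'b) \<Rightarrow> bool" where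
  "rel_strict_deriv F f x L \<longleftrightarrow> linear L \<and>
     ((x \<in> F \<and> \<not> x islimpt F) \<or>
      ((\<lambda>(y, z). norm (f y - f z - L (y - z)) / norm (y - z)) \<longlongrightarrow> 0)
        (at (x, x) within {(y, z). y \<in> F \<and> z \<in> F \<and> y \<noteq> z}))"

definition rel_strict_differentiable ::
  "'a::euclidean_space set \<Rightarrow> ('a \<Rightarrow> 'b::real_normed_vector) \<Rightarrow> 'a \<Rightarrow> bool" where
  "rel_strict_differentiable F f x \<longleftrightarrow> (\<exists>L. rel_strict_deriv F f x L)"

end

theory Submission
  imports Defs
begin

text \<open>If \<open>L\<^sub>1\<close> and \<open>L\<^sub>2\<close> are both relative strict derivatives at a limit point \<open>x\<close> of \<open>F\<close>, the
  difference quotient of \<open>D = L\<^sub>1 - L\<^sub>2\<close> tends to \<open>0\<close> along pairs of distinct points of \<open>F\<close>.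
  Along paratangent sequences \<open>\<alpha>\<^sub>k (y\<^sub>k - x\<^sub>k) \<rightarrow> v\<close> this forces \<open>D v = 0\<close>, so \<open>D\<close> vanishes on
  the span of \<open>Ptg F x\<close>, which is the whole space.\<close>

lemma tendsto_diff_quotient_diff:
  fixes f :: "'a::real_normed_vector \<Rightarrow> 'b::real_normed_vector"
  assumes "((\<lambda>(y, z). norm (f y - f z - L1 (y - z)) / norm (y - z)) \<longlongrightarrow> 0) net"
    and "((\<lambda>(y, z). norm (f y - f z - L2 (y - z)) / norm (y - z)) \<longlongrightarrow> 0) net"
  shows "((\<lambda>(y, z). norm (L1 (y - z) - L2 (y - z)) / norm (y - z)) \<longlongrightarrow> 0) net"
proof (rule tendsto_sandwich[where f = "\<lambda>_. 0"])
  have "norm (L1 (y - z) - L2 (y - z)) / norm (y - z)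
      \<le> norm (f y - f z - L1 (y - z)) / norm (y - z) + norm (f y - f z - L2 (y - z)) / norm (y - z)"
    for y z :: 'a
  proof -
    have "L1 (y - z) - L2 (y - z) = (f y - f z - L2 (y - z)) - (f y - f z - L1 (y - z))"
      by simp
    then have "norm (L1 (y - z) - L2 (y - z))
        \<le> norm (f y - f z - L1 (y - z)) + norm (f y - f z - L2 (y - z))"
      by (metis add.commute norm_triangle_ineq4)
    then show ?thesis
      by (simp add: add_divide_distrib[symmetric] divide_right_mono)
  qed
  then show "\<forall>\<^sub>F p in net. (\<lambda>(y, z). norm (L1 (y - z) - L2 (y - z)) / norm (y - z)) p
      \<le> (\<lambda>(y, z). norm (f y - f z - L1 (y - z)) / norm (y - z)
                 + norm (f y - f z - L2 (y - z)) / norm (y - z)) p"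
    by (simp add: split_def)
  show "((\<lambda>(y, z). norm (f y - f z - L1 (y - z)) / norm (y - z)
                 + norm (f y - f z - L2 (y - z)) / norm (y - z)) \<longlongrightarrow> 0) net"
    using tendsto_add[OF assms] by (simp add: split_def)
qed (auto simp: split_def)

lemma bounded_linear_vanishes_on_Ptg:
  fixes D :: "'a::real_normed_vector \<Rightarrow> 'b::real_normed_vector"
  assumes D: "bounded_linear D"
    and lim: "((\<lambda>(y, z). norm (D (y - z)) / norm (y - z)) \<longlongrightarrow> 0)
        (at (x, x) within {(y, z). y \<in> F \<and> z \<in> F \<and> y \<noteq> z})"
    and v: "v \<in> Ptg F x"
  shows "D v = 0"
proof -
  interpret D: bounded_linear D by (fact D)
  obtain xk yk and \<alpha> :: "nat \<Rightarrow> real" where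
    mem: "\<forall>k. xk k \<in> F \<and> yk k \<in> F" and xk: "xk \<longlonglongrightarrow> x" and yk: "yk \<longlonglongrightarrow> x"
    and \<alpha>v: "(\<lambda>k. \<alpha> k *\<^sub>R (yk k - xk k)) \<longlonglongrightarrow> v"
    using v unfolding Ptg_def by blast
  define g where "g = (\<lambda>(y, z). norm (D (y - z)) / norm (y - z))"
  text \<open>On the diagonal \<open>g\<close> takes the junk value \<open>0 / 0 = 0\<close>, so it is continuous at \<open>(x, x)\<close>
    within all of \<open>F \<times> F\<close> and we need not treat indices with \<open>y\<^sub>k = x\<^sub>k\<close> separately.\<close>
  have "(g \<longlongrightarrow> 0) (at (x, x) within {(y, z). y \<in> F \<and> z \<in> F \<and> y = z})"
    by (rule tendsto_eventually) (simp add: g_def eventually_at_filter split_def)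
  with lim have "(g \<longlongrightarrow> 0)
      (at (x, x) within {(y, z). y \<in> F \<and> z \<in> F \<and> y \<noteq> z} \<union> {(y, z). y \<in> F \<and> z \<in> F \<and> y = z})"
    unfolding g_def by (rule Lim_Un)
  moreover have "{(y, z). y \<in> F \<and> z \<in> F \<and> y \<noteq> z} \<union> {(y, z). y \<in> F \<and> z \<in> F \<and> y = z} = F \<times> F"
    by auto
  ultimately have "(g \<longlongrightarrow> 0) (at (x, x) within F \<times> F)"
    by simp
  then have "continuous (at (x, x) within F \<times> F) g"
    by (simp add: continuous_within g_def)
  then have "(g \<circ> (\<lambda>k. (yk k, xk k))) \<longlonglongrightarrow> g (x, x)"
    using mem tendsto_Pair[OF yk xk] unfolding continuous_within_sequentially
    by (elim allE[of _ "\<lambda>k. (yk k, xk k)"] mp) (simp add: mem_Times_iff)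
  then have g0: "(\<lambda>k. g (yk k, xk k)) \<longlonglongrightarrow> 0"
    by (simp add: o_def g_def)
  have "norm (D (\<alpha> k *\<^sub>R (yk k - xk k))) = g (yk k, xk k) * norm (\<alpha> k *\<^sub>R (yk k - xk k))" for k
    by (cases "yk k = xk k") (simp_all add: g_def D.scale)
  moreover have "(\<lambda>k. g (yk k, xk k) * norm (\<alpha> k *\<^sub>R (yk k - xk k))) \<longlonglongrightarrow> 0 * norm v"
    by (intro tendsto_mult g0 tendsto_norm \<alpha>v)
  ultimately have "(\<lambda>k. norm (D (\<alpha> k *\<^sub>R (yk k - xk k)))) \<longlonglongrightarrow> 0"
    by simp
  then have "(\<lambda>k. D (\<alpha> k *\<^sub>R (yk k - xk k))) \<longlonglongrightarrow> 0"
    by (rule tendsto_norm_zero_cancel)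
  moreover have "(\<lambda>k. D (\<alpha> k *\<^sub>R (yk k - xk k))) \<longlonglongrightarrow> D v"
    using \<alpha>v by (rule D.tendsto)
  ultimately show ?thesis
    using LIMSEQ_unique by metis
qed

lemma rel_strict_deriv_eq_on_span_Ptg:
  fixes F :: "'a::euclidean_space set" and f :: "'a \<Rightarrow> 'b::real_normed_vector"
  assumes "x islimpt F"
    and L1: "rel_strict_deriv F f x L1" and L2: "rel_strict_deriv F f x L2"
    and "u \<in> span (Ptg F x)"
  shows "L1 u = L2 u"
proof -
  define D where "D u = L1 u - L2 u" for u
  have "linear L1" "linear L2"
    using L1 L2 by (auto simp: rel_strict_deriv_def)
  then have D: "linear D"
    unfolding D_def by (rule linear_compose_sub)
  have "((\<lambda>(y, z). norm (D (y - z)) / norm (y - z)) \<longlongrightarrow> 0)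
      (at (x, x) within {(y, z). y \<in> F \<and> z \<in> F \<and> y \<noteq> z})"
    unfolding D_def
    by (rule tendsto_diff_quotient_diff)
       (use L1 L2 \<open>x islimpt F\<close> in \<open>auto simp: rel_strict_deriv_def\<close>)
  then have "\<forall>v\<in>Ptg F x. D v = 0"
    using bounded_linear_vanishes_on_Ptg D by (blast dest: linear_conv_bounded_linear[THEN iffD1])
  then have "D u = 0"
    using linear_eq_0_on_span[OF D] \<open>u \<in> span (Ptg F x)\<close> by blast
  then show ?thesis
    by (simp add: D_def)
qed

theorem lemmaB2:
  fixes F :: "'a::euclidean_space set" and f :: "'a \<Rightarrow> 'b::real_normed_vector" and x :: 'a
  assumes "x \<in> F \<inter> der F"
    and "rel_strict_differentiable F f x"
    and "span (Ptg F x) = UNIV"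
  shows "\<exists>!L. rel_strict_deriv F f x L"
proof -
  obtain L where "rel_strict_deriv F f x L"
    using assms(2) unfolding rel_strict_differentiable_def by blast
  moreover have "L1 = L2" if "rel_strict_deriv F f x L1" "rel_strict_deriv F f x L2" for L1 L2
    using rel_strict_deriv_eq_on_span_Ptg[OF _ that] assms(1,3) by (auto simp: der_def)
  ultimately show ?thesis
    by blast
qed

end
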